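(* Fix an integer $d\geqslant 3$. Then there is a constant $C>0$ (depending only on $d$) such that $P(n,d)\leqslant C\,n^{2d-3}$ for all sufficiently large $n$; i.e., $P(n,d)=O(n^{2d-3})$ as $n\to\infty$.
   Context: Let $S_n$ be the symmetric group on $[n]$, permutations written as $\pi=(\pi(1),\dots,\pi(n))$. The characteristic set of $\pi$ is $A(\pi)=\{(\pi(i),\pi(i+1)):1\leqslant i<n\}$, and the block permutation distance is $d_B(\pi_1,\pi_2)=|A(\pi_1)\setminus A(\pi_2)|$ (equivalently, $d_B(\pi_1,\pi_2)+1$ is the minimum number of consecutive segments into which $\pi_1$ must be cut so that $\pi_2$ is obtained by rearranging these segments). The $(n,d)$-block permutation graph $\mathcal{G}_{n,d}$ has vertex set $S_n$, with distinct $\pi,\sigma$ adjacent iff $d_B(\pi,\sigma)<d$. Let $\mathcal{H}_{n,d}$ be the subgraph of $\mathcal{G}_{n,d}$ induced by the neighborhood of the identity permutation $(1,2,\dots,n)$ (i.e. by all $\sigma$ with $1\leqslant d_B(\sigma,\mathrm{id})\leqslant d-1$), and let $P(n,d)$ denote the number of edges of $\mathcal{H}_{n,d}$. *)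

theory Defs
  imports Complex_Main
begin

text \<open>Permutations of [n] = {1..n}, written in one-line notation as lists
  (pi(1),...,pi(n)).\<close>
definition perms :: "nat \<Rightarrow> nat list set" where
  "perms n = {p. distinct p \<and> set p = {1..n}}"

definition char_set :: "nat list \<Rightarrow> (nat \<times> nat) set" where
  "char_set p = {(p ! i, p ! (Suc i)) | i. Suc i < length p}"

definition dB :: "nat list \<Rightarrow> nat list \<Rightarrow> nat" where
  "dB p q = card (char_set p - char_set q)"

definition id_perm :: "nat \<Rightarrow> nat list" where
  "id_perm n = [1..<Suc n]"

text \<open>Vertex set of H_{n,d}: neighbourhood of the identity in G_{n,d}.\<close>
definition H_vertices :: "nat \<Rightarrow> nat \<Rightarrow> nat list set" where
  "H_vertices n d = {s \<in> perms n. 1 \<le> dB s (id_perm n) \<and> dB s (id_perm n) < d}"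

definition H_edges :: "nat \<Rightarrow> nat \<Rightarrow> nat list set set" where
  "H_edges n d = {{p, q} | p q. p \<in> H_vertices n d \<and> q \<in> H_vertices n d \<and> p \<noteq> q \<and> dB p q < d}"

definition P :: "nat \<Rightarrow> nat \<Rightarrow> nat" where
  "P n d = card (H_edges n d)"

end

theory Submission
  imports Defs
begin

text \<open>Call \<open>i\<close> a breakpoint of \<open>\<sigma>\<close> if \<open>i + 1\<close> does not follow \<open>i\<close> in \<open>\<sigma>\<close>, so that
  \<open>\<sigma>\<close> has \<open>d\<^sub>B(\<sigma>, id)\<close> breakpoints. Apart from the pairs \<open>(i, i + 1)\<close>, every adjacency
  of \<open>\<sigma>\<close> joins two values next to a breakpoint. Hence a permutation whose breakpoints lie
  in \<open>T\<close> is determined by its first entry and its adjacencies inside a set of size at most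
  \<open>2|T| + 2\<close>, and there are \<open>O\<^sub>d(1)\<close> of them when \<open>|T| \<le> 2d - 3\<close>.

  If \<open>\<sigma>\<tau>\<close> is an edge of \<open>H(n, d)\<close>, the pairs \<open>(i, i + 1)\<close> with \<open>i\<close> a breakpoint of \<open>\<tau>\<close>
  but not of \<open>\<sigma>\<close> lie in \<open>A(\<sigma>) - A(\<tau>)\<close>, and so does the successor pair of any breakpoint
  of \<open>\<sigma>\<close> but not of \<open>\<tau>\<close> other than the last entry of \<open>\<sigma>\<close>. Counting shows that the union
  \<open>T\<close> of the two breakpoint sets has at most \<open>2d - 3\<close> elements, and there are at most
  \<open>n\<^bsup>2d-3\<^esup>\<close> such sets \<open>T \<subseteq> [n - 1]\<close>.\<close>

section \<open>Characteristic sets of lists\<close>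

lemma mem_char_set:
  "(a, b) \<in> char_set xs \<longleftrightarrow> (\<exists>i. Suc i < length xs \<and> xs ! i = a \<and> xs ! Suc i = b)"
  unfolding char_set_def by auto

lemma char_set_conv_image: "char_set xs = (\<lambda>i. (xs ! i, xs ! Suc i)) ` {..<length xs - 1}"
  unfolding char_set_def by auto

lemma finite_char_set [simp]: "finite (char_set xs)"
  unfolding char_set_conv_image by simp

lemma card_char_set: "distinct xs \<Longrightarrow> card (char_set xs) = length xs - 1"
  unfolding char_set_conv_image
  by (subst card_image) (auto simp: inj_on_def nth_eq_iff_index_eq)

lemma char_set_subset: "char_set xs \<subseteq> set xs \<times> set xs"
  unfolding char_set_def by auto

lemma char_set_succ_exists:
  assumes "x \<in> set xs" "x \<noteq> last xs"
  shows "\<exists>y. (x, y) \<in> char_set xs"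
proof -
  obtain j where j: "j < length xs" "xs ! j = x"
    using assms(1) by (auto simp: in_set_conv_nth)
  moreover have "j \<noteq> length xs - 1"
    using assms(2) j last_conv_nth[of xs] by fastforce
  ultimately have "Suc j < length xs"
    by linarith
  then show ?thesis
    using j unfolding mem_char_set by blast
qed

lemma char_set_succ_unique:
  "distinct xs \<Longrightarrow> (a, b) \<in> char_set xs \<Longrightarrow> (a, c) \<in> char_set xs \<Longrightarrow> b = c"
  unfolding mem_char_set by (metis Suc_lessD nth_eq_iff_index_eq)

lemma char_set_pred_unique:
  "distinct xs \<Longrightarrow> (a, b) \<in> char_set xs \<Longrightarrow> (c, b) \<in> char_set xs \<Longrightarrow> a = c"
  unfolding mem_char_set by (metis Suc_lessD nth_eq_iff_index_eq Suc_inject)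

lemma char_set_hd_inject:
  assumes "distinct ys" "length xs = length ys" "hd xs = hd ys" "char_set xs = char_set ys"
  shows "xs = ys"
proof (rule nth_equalityI)
  show "length xs = length ys" by fact
  show "xs ! i = ys ! i" if "i < length xs" for i
    using that
  proof (induction i)
    case 0
    then show ?case using assms(2,3) by (metis hd_conv_nth length_greater_0_conv)
  next
    case (Suc i)
    then have "(xs ! i, xs ! Suc i) \<in> char_set xs" "(ys ! i, ys ! Suc i) \<in> char_set ys"
      using assms(2) unfolding mem_char_set by auto
    then show ?case using Suc assms(4) char_set_succ_unique[OF assms(1)] by simp
  qed
qed

lemma char_set_id_perm: "char_set (id_perm n) = (\<lambda>i. (i, Suc i)) ` {1..<n}"
proof -
  have "char_set (id_perm n) = (\<lambda>i. (Suc i, Suc (Suc i))) ` {..<n - 1}"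
    unfolding char_set_conv_image by (auto simp: id_perm_def simp del: upt_Suc)
  also have "{..<n - 1} = (\<lambda>i. i - 1) ` {1..<n}"
    by (cases n) (auto simp: image_iff intro!: bexI[of _ "Suc _"])
  also have "(\<lambda>i. (Suc i, Suc (Suc i))) ` (\<lambda>i. i - 1) ` {1..<n} = (\<lambda>i. (i, Suc i)) ` {1..<n}"
    by (auto simp: image_iff)
  finally show ?thesis .
qed

lemma perms_distinct: "p \<in> perms n \<Longrightarrow> distinct p"
  unfolding perms_def by auto

lemma set_perms: "p \<in> perms n \<Longrightarrow> set p = {1..n}"
  unfolding perms_def by auto

lemma length_perms: "p \<in> perms n \<Longrightarrow> length p = n"
  using distinct_card[of p] by (simp add: perms_distinct set_perms)

lemma finite_perms: "finite (perms n)"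
  by (rule finite_subset[OF _ finite_lists_length_eq[of "{1..n}" n]])
    (auto simp: set_perms length_perms)

section \<open>Breakpoints\<close>

definition breakpoints :: "nat \<Rightarrow> nat list \<Rightarrow> nat set" where
  "breakpoints n p = {i \<in> {1..<n}. (i, Suc i) \<notin> char_set p}"

lemma breakpoints_subset: "breakpoints n p \<subseteq> {1..<n}"
  unfolding breakpoints_def by auto

lemma finite_breakpoints [simp]: "finite (breakpoints n p)"
  using breakpoints_subset by (rule finite_subset) simp

lemma card_Diff_swap:
  assumes "finite A" "finite B" "card A = card B"
  shows "card (A - B) = card (B - A)"
  using assms by (simp add: card_Diff_subset_Int Int_commute)

lemma card_breakpoints:
  assumes "p \<in> perms n"
  shows "card (breakpoints n p) = dB p (id_perm n)"
proof -
  have "card (char_set (id_perm n)) = card (char_set p)"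
    using assms by (simp add: card_char_set perms_distinct length_perms id_perm_def)
  then have "dB p (id_perm n) = card (char_set (id_perm n) - char_set p)"
    unfolding dB_def by (simp add: card_Diff_swap)
  also have "char_set (id_perm n) - char_set p = (\<lambda>i. (i, Suc i)) ` breakpoints n p"
    unfolding char_set_id_perm breakpoints_def by auto
  also have "card \<dots> = card (breakpoints n p)"
    by (rule card_image) (auto simp: inj_on_def)
  finally show ?thesis by simp
qed

definition break_ends :: "nat \<Rightarrow> nat set \<Rightarrow> nat set" where
  "break_ends n T = insert 1 (insert n (T \<union> Suc ` T))"

lemma card_break_ends: "card (break_ends n T) \<le> 2 * card T + 2"
proof -
  have "break_ends n T = {1, n} \<union> T \<union> Suc ` T"
    unfolding break_ends_def by auto
  moreover have "card {1, n} \<le> 2"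
    by (simp add: card_insert_if)
  ultimately show ?thesis
    using card_Un_le[of "{1, n} \<union> T" "Suc ` T"] card_Un_le[of "{1, n}" T] card_image_le[of T Suc]
    by (cases "finite T") auto
qed

lemma hd_in_break_ends:
  assumes p: "p \<in> perms n" and "n \<ge> 1" and T: "breakpoints n p \<subseteq> T"
  shows "hd p \<in> break_ends n T"
proof (cases "hd p = 1")
  case False
  have "p \<noteq> []" using length_perms[OF p] \<open>n \<ge> 1\<close> by auto
  then have hd: "hd p \<in> {1..n}" using set_perms[OF p] by (metis hd_in_set)
  have "(hd p - 1, hd p) \<notin> char_set p"
    using perms_distinct[OF p] \<open>p \<noteq> []\<close>
    by (auto simp: mem_char_set hd_conv_nth nth_eq_iff_index_eq)
  then have "hd p - 1 \<in> T" using False hd T unfolding breakpoints_def by auto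
  then have "Suc (hd p - 1) \<in> break_ends n T" unfolding break_ends_def by blast
  then show ?thesis using False hd by simp
qed (simp add: break_ends_def)

lemma char_set_diff_id_perm_subset:
  assumes p: "p \<in> perms n" and T: "breakpoints n p \<subseteq> T"
  shows "char_set p - char_set (id_perm n) \<subseteq> break_ends n T \<times> break_ends n T"
proof
  fix x assume "x \<in> char_set p - char_set (id_perm n)"
  moreover obtain a b where x: "x = (a, b)" by (cases x)
  ultimately have ab: "(a, b) \<in> char_set p" "(a, b) \<notin> char_set (id_perm n)" by auto
  have dist: "distinct p" and range: "a \<in> {1..n}" "b \<in> {1..n}"
    using p ab(1) char_set_subset[of p] by (auto simp: perms_distinct set_perms)
  have "b \<noteq> Suc a \<or> a = n"
    using ab(2) range unfolding char_set_id_perm by auto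
  then have "(a, Suc a) \<notin> char_set p \<or> a = n"
    using char_set_succ_unique[OF dist ab(1)] by blast
  then have "a \<in> T \<or> a = n"
    using range T unfolding breakpoints_def by auto
  then have "a \<in> break_ends n T"
    unfolding break_ends_def by blast
  have "a \<noteq> b - 1 \<or> b = 1"
    using ab(2) range unfolding char_set_id_perm by (auto simp: image_iff)
  then have "(b - 1, b) \<notin> char_set p \<or> b = 1"
    using char_set_pred_unique[OF dist ab(1)] by blast
  then have "b - 1 \<in> T \<or> b = 1"
    using range T unfolding breakpoints_def by auto
  then have "Suc (b - 1) \<in> break_ends n T \<or> b = 1"
    unfolding break_ends_def by blast
  then have "b \<in> break_ends n T"
    using range by (auto simp: break_ends_def)
  with \<open>a \<in> break_ends n T\<close> show "x \<in> break_ends n T \<times> break_ends n T"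
    using x by blast
qed

lemma char_set_outside_break_ends:
  assumes p: "p \<in> perms n" and T: "breakpoints n p \<subseteq> T"
  defines "W \<equiv> break_ends n T"
  shows "char_set p - W \<times> W = char_set (id_perm n) - W \<times> W"
proof
  show "char_set p - W \<times> W \<subseteq> char_set (id_perm n) - W \<times> W"
    using char_set_diff_id_perm_subset[OF assms(1,2)] unfolding W_def by blast
  have "(i, Suc i) \<in> char_set p" if "i \<in> {1..<n}" "(i, Suc i) \<notin> W \<times> W" for i
    using that T unfolding breakpoints_def W_def break_ends_def by blast
  then show "char_set (id_perm n) - W \<times> W \<subseteq> char_set p - W \<times> W"
    unfolding char_set_id_perm by blast
qed

lemma card_perms_breakpoints_subset:
  assumes "n \<ge> 1" and "finite T" and "card T \<le> m"
  shows "card {p \<in> perms n. breakpoints n p \<subseteq> T}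
           \<le> (2 * m + 2) * 2 ^ ((2 * m + 2) * (2 * m + 2))"
proof -
  define W where "W = break_ends n T"
  define code where "code p = (hd p, char_set p \<inter> W \<times> W)" for p
  let ?A = "{p \<in> perms n. breakpoints n p \<subseteq> T}"
  have "inj_on code ?A"
  proof (rule inj_onI)
    fix p q assume p: "p \<in> ?A" and q: "q \<in> ?A" and eq: "code p = code q"
    have "char_set p = (char_set p \<inter> W \<times> W) \<union> (char_set (id_perm n) - W \<times> W)"
      using p char_set_outside_break_ends[of p n T] unfolding W_def by blast
    also have "\<dots> = (char_set q \<inter> W \<times> W) \<union> (char_set (id_perm n) - W \<times> W)"
      using eq unfolding code_def by simp
    also have "\<dots> = char_set q"
      using q char_set_outside_break_ends[of q n T] unfolding W_def by blast
    finally have "char_set p = char_set q" .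
    moreover have "hd p = hd q"
      using eq unfolding code_def by simp
    ultimately show "p = q"
      using p q by (intro char_set_hd_inject) (auto simp: perms_distinct length_perms)
  qed
  moreover have "code ` ?A \<subseteq> W \<times> Pow (W \<times> W)"
    using hd_in_break_ends[OF _ assms(1)] unfolding code_def W_def by auto
  moreover have "finite W"
    unfolding W_def break_ends_def using \<open>finite T\<close> by simp
  ultimately have "card ?A \<le> card (W \<times> Pow (W \<times> W))"
    by (intro card_inj_on_le) auto
  also have "\<dots> = card W * 2 ^ (card W * card W)"
    using \<open>finite W\<close> by (simp add: card_cartesian_product card_Pow)
  also have "\<dots> \<le> (2 * m + 2) * 2 ^ ((2 * m + 2) * (2 * m + 2))"
    using card_break_ends[of n T] \<open>card T \<le> m\<close> unfolding W_def
    by (intro mult_mono power_increasing) simp_all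
  finally show ?thesis .
qed

lemma successor_pairs_breakpoints_diff:
  "(\<lambda>i. (i, Suc i)) ` (breakpoints n q - breakpoints n p) \<subseteq> char_set p - char_set q"
  unfolding breakpoints_def by auto

lemma card_breakpoints_diff_less_dB:
  assumes p: "p \<in> perms n" and q: "q \<in> perms n"
    and a: "a \<in> breakpoints n p - breakpoints n q" "a \<noteq> last p"
  shows "card (breakpoints n q - breakpoints n p) < dB p q"
proof -
  let ?S = "(\<lambda>i. (i, Suc i)) ` (breakpoints n q - breakpoints n p)"
  have a_range: "a \<in> {1..<n}"
    using a(1) breakpoints_subset by blast
  then obtain b where ab: "(a, b) \<in> char_set p"
    using char_set_succ_exists[of a p] a(2) set_perms[OF p] by auto
  have "(a, Suc a) \<notin> char_set p" "(a, Suc a) \<in> char_set q"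
    using a(1) a_range unfolding breakpoints_def by auto
  then have "b \<noteq> Suc a" "(a, b) \<notin> char_set q"
    using ab char_set_succ_unique[OF perms_distinct[OF q]] by auto
  then have "(a, b) \<notin> ?S" "insert (a, b) ?S \<subseteq> char_set p - char_set q"
    using ab successor_pairs_breakpoints_diff by auto
  then have "Suc (card ?S) \<le> dB p q"
    unfolding dB_def using card_mono[of "char_set p - char_set q" "insert (a, b) ?S"] by simp
  moreover have "card ?S = card (breakpoints n q - breakpoints n p)"
    by (rule card_image) (auto simp: inj_on_def)
  ultimately show ?thesis by simp
qed

lemma card_breakpoints_Un_le:
  assumes "d \<ge> 3" and p: "p \<in> perms n" and q: "q \<in> perms n"
    and "dB p (id_perm n) < d" "dB q (id_perm n) < d" "dB p q < d"
  shows "card (breakpoints n p \<union> breakpoints n q) \<le> 2 * d - 3"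
proof (rule ccontr)
  let ?Bp = "breakpoints n p" and ?Bq = "breakpoints n q"
  have union: "card (?Bp \<union> ?Bq) = card ?Bp + card (?Bq - ?Bp)"
              "card (?Bp \<union> ?Bq) = card ?Bq + card (?Bp - ?Bq)"
    using card_Un_disjoint[of ?Bp "?Bq - ?Bp"] card_Un_disjoint[of ?Bq "?Bp - ?Bq"]
    by (simp_all add: Un_commute)
  have small: "card ?Bp < d" "card ?Bq < d"
    using assms(4,5) card_breakpoints[OF p] card_breakpoints[OF q] by simp_all
  assume large: "\<not> ?thesis"
  then have "card (?Bp - ?Bq) \<ge> 2"
    using union(2) small(2) \<open>d \<ge> 3\<close> by linarith
  then have "\<not> ?Bp - ?Bq \<subseteq> {last p}"
    using card_mono[of "{last p}" "?Bp - ?Bq"] by auto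
  then obtain a where "a \<in> ?Bp - ?Bq" "a \<noteq> last p"
    by blast
  then have "card (?Bq - ?Bp) < dB p q"
    by (rule card_breakpoints_diff_less_dB[OF p q])
  then show False
    using large union(1) small(1) \<open>dB p q < d\<close> by linarith
qed

section \<open>Counting edges\<close>

lemma card_subsets_card_le:
  assumes "finite A"
  shows "card {S. S \<subseteq> A \<and> card S \<le> k} \<le> Suc (card A) ^ k"
proof -
  let ?L = "{xs. set xs \<subseteq> insert None (Some ` A) \<and> length xs = k}"
  have "{S. S \<subseteq> A \<and> card S \<le> k} \<subseteq> (\<lambda>xs. Some -` set xs) ` ?L"
  proof clarify
    fix S assume S: "S \<subseteq> A" "card S \<le> k"
    then obtain ys where ys: "set ys = S" "distinct ys"
      using finite_distinct_list[OF finite_subset[OF S(1) assms]] by blast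
    let ?xs = "map Some ys @ replicate (k - card S) None"
    have "length ?xs = k" "set ?xs \<subseteq> insert None (Some ` A)" "Some -` set ?xs = S"
      using S ys distinct_card[OF ys(2)] by auto
    then show "S \<in> (\<lambda>xs. Some -` set xs) ` ?L"
      by (intro image_eqI[of _ _ ?xs]) auto
  qed
  moreover have "finite ?L"
    using assms by (simp add: finite_lists_length_eq)
  ultimately have "card {S. S \<subseteq> A \<and> card S \<le> k} \<le> card ((\<lambda>xs. Some -` set xs) ` ?L)"
    by (simp add: card_mono)
  also have "\<dots> \<le> card ?L"
    using \<open>finite ?L\<close> by (rule card_image_le)
  also have "\<dots> = Suc (card A) ^ k"
    using assms by (simp add: card_lists_length_eq card_image)
  finally show ?thesis .
qed

lemma P_le_power:
  assumes "d \<ge> 3" and "n \<ge> 1"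
  defines "L \<equiv> 2 * d - 3"
  shows "P n d \<le> ((2 * L + 2) * 2 ^ ((2 * L + 2) * (2 * L + 2))) ^ 2 * n ^ L"
proof -
  define c where "c = (2 * L + 2) * 2 ^ ((2 * L + 2) * (2 * L + 2))"
  define B where "B T = {p \<in> perms n. breakpoints n p \<subseteq> T}" for T
  define Ts where "Ts = {T. T \<subseteq> {1..<n} \<and> card T \<le> L}"
  define Pairs where "Pairs = {(p, q). p \<in> H_vertices n d \<and> q \<in> H_vertices n d \<and> dB p q < d}"
  have cover: "Pairs \<subseteq> (\<Union>T\<in>Ts. B T \<times> B T)"
  proof clarify
    fix p q assume "(p, q) \<in> Pairs"
    then have "p \<in> perms n" "q \<in> perms n" "dB p (id_perm n) < d" "dB q (id_perm n) < d" "dB p q < d"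
      unfolding Pairs_def H_vertices_def by auto
    then have "breakpoints n p \<union> breakpoints n q \<in> Ts" "p \<in> B (breakpoints n p \<union> breakpoints n q)"
      "q \<in> B (breakpoints n p \<union> breakpoints n q)"
      using card_breakpoints_Un_le[OF assms(1)] breakpoints_subset
      unfolding Ts_def B_def L_def by auto
    then show "(p, q) \<in> (\<Union>T\<in>Ts. B T \<times> B T)" by blast
  qed
  have "finite Ts"
    unfolding Ts_def by simp
  then have finite_cover: "finite (\<Union>T\<in>Ts. B T \<times> B T)"
    unfolding B_def using finite_perms by simp
  have "H_edges n d \<subseteq> (\<lambda>(p, q). {p, q}) ` Pairs"
    unfolding H_edges_def Pairs_def by auto
  moreover have "finite Pairs"
    using cover finite_cover by (rule finite_subset)
  ultimately have "P n d \<le> card ((\<lambda>(p, q). {p, q}) ` Pairs)"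
    unfolding P_def by (simp add: card_mono)
  also have "\<dots> \<le> card Pairs"
    using \<open>finite Pairs\<close> by (rule card_image_le)
  also have "\<dots> \<le> card (\<Union>T\<in>Ts. B T \<times> B T)"
    using cover finite_cover by (rule card_mono[rotated])
  also have "\<dots> \<le> (\<Sum>T\<in>Ts. card (B T \<times> B T))"
    using \<open>finite Ts\<close> by (rule card_UN_le)
  also have "\<dots> \<le> (\<Sum>T\<in>Ts. c ^ 2)"
  proof (rule sum_mono)
    fix T assume "T \<in> Ts"
    then have "card (B T) \<le> c"
      unfolding B_def c_def Ts_def using card_perms_breakpoints_subset[OF assms(2)]
      by (auto intro: finite_subset)
    then show "card (B T \<times> B T) \<le> c ^ 2"
      by (simp add: card_cartesian_product power2_eq_square mult_le_mono)
  qed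
  also have "\<dots> = card Ts * c ^ 2" by simp
  also have "card Ts \<le> n ^ L"
    using card_subsets_card_le[of "{1..<n}" L] assms(2) unfolding Ts_def by simp
  finally show ?thesis
    unfolding c_def by (simp add: mult.commute mult_right_mono)
qed

theorem mainTheorem2:
  fixes d :: nat
  assumes "d \<ge> 3"
  shows "\<exists>C::real. C > 0 \<and> (\<exists>N. \<forall>n\<ge>N. real (P n d) \<le> C * real n ^ (2 * d - 3))"
proof -
  define L where "L = 2 * d - 3"
  define C where "C = ((2 * L + 2) * 2 ^ ((2 * L + 2) * (2 * L + 2))) ^ 2"
  have "real (P n d) \<le> real C * real n ^ (2 * d - 3)" if "n \<ge> 1" for n
    using P_le_power[OF assms that] unfolding C_def L_def
    by (metis of_nat_le_iff of_nat_mult of_nat_power)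
  moreover have "C > 0"
    unfolding C_def by simp
  ultimately show ?thesis
    using of_nat_0_less_iff by blast
qed

end
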